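(* Let a countable group $G$ act on a set $X$, let $\Phi=(\ell,\phi,\mathcal{Z},\Gamma,\mathcal{H})$ be a chart for $G$, let $0<\epsilon<1$, let $A\subseteq\mathbb{Z}^\ell\times\Gamma$ be a centered rectangle, and let $E$ be a $(\Phi,A,\epsilon)$-rectangular equivalence relation on $X$. Let $U$ be an $E$-class meeting $X^{\mathcal{H}}$, let $y\in X^{\mathcal{H}}$, and let $M>0$ with $M\le 2^{22\ell}-8$ be such that $\phi(M\cdot A)\cdot y$ meets $U$. Then there are $v\in\mathrm{dom}(\phi)$, a rectangle $B\subseteq\mathbb{Z}^\ell\times\Gamma$ and $\delta>0$ such that $\phi(v)\cdot y\in X^{\mathcal{H}}$, $U$ is $(\Phi,\delta)$-roughly $B$ at $\phi(v)\cdot y$, $A\sqsubseteq B$, $2\delta\cdot B\sqsubseteq\epsilon\cdot A$, and $2^{22\ell}\cdot B\subseteq\mathrm{dom}(\phi)$. Moreover $U$ is $(\Phi,2\delta)$-roughly $B+v$ at $y$.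
   Context: Rectangles: Let $\Gamma$ be a finite additive abelian group with identity $0_\Gamma$ and $\ell\in\mathbb{N}$. Elements $v$ of $\mathbb{R}^\ell\times\Gamma$ have coordinates $v_1,\dots,v_\ell\in\mathbb{R}$, $v_{\ell+1}\in\Gamma$; $\mathbf{0}$ has first $\ell$ coordinates $0$ and last coordinate $0_\Gamma$. For $\lambda\in\mathbb{R}$, $\lambda\cdot v=(\lambda v_1,\dots,\lambda v_\ell,v_{\ell+1})$. $\mathrm{Rec}(a)=\{b\in\mathbb{Z}^\ell\times\Gamma: -|a_i|\le b_i\le|a_i|,\ 1\le i\le\ell\}$. A rectangle is a set $c+\mathrm{Rec}(a)$ with $c,a\in\mathbb{Z}^\ell\times\Gamma$; it can be written uniquely with $c\in\mathbb{Z}^\ell\times\{0_\Gamma\}$ (center) and $a\in\mathbb{N}^\ell\times\{0_\Gamma\}$ (radius vector $\mathrm{L}(A)$, entries $\mathrm{L}_i(A)$). Centered means center $\mathbf{0}$. $A\sqsubseteq B$ means $\mathrm{L}_i(A)\le\mathrm{L}_i(B)$ for all $i$. For $\lambda>0$, $\lambda\cdot A=c+\mathrm{Rec}(\lambda\cdot\mathrm{L}(A))$ with $c$ the center of $A$. Sums of sets/vectors are elementwise. Charts: a chart for $G$ is $\Phi=(\ell,\phi,\mathcal{Z},\Gamma,\mathcal{H})$ with $\mathcal{H}$ a finite collection of pairwise conjugate subgroups of $G$, $\Gamma$ finite abelian, $\mathcal{Z}$ a centered rectangle with all $\mathrm{L}_i(\mathcal{Z})>0$, $\phi$ an injective map into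 $G$ with $\mathrm{dom}(\phi)$ a centered rectangle containing $3\cdot\mathcal{Z}$, $\phi(\mathbf{0})=1_G$, and for all $r,s\in\mathrm{dom}(\phi)$, $H\in\mathcal{H}$: $\phi(r)H=\phi(s)H\Rightarrow r=s$; $r+s+\mathcal{Z}\subseteq\mathrm{dom}(\phi)\Rightarrow\exists z\in\mathcal{Z}:\phi(r)\phi(s)H=\phi(r+s+z)H$; $r-s+\mathcal{Z}\subseteq\mathrm{dom}(\phi)\Rightarrow\exists z\in\mathcal{Z}:\phi(r)\phi(s)^{-1}H=\phi(r-s+z)H$; $-r+s+\mathcal{Z}\subseteq\mathrm{dom}(\phi)\Rightarrow\exists z\in\mathcal{Z}:\phi(r)^{-1}\phi(s)H=\phi(-r+s+z)H$; $-s+\mathcal{Z}\subseteq\mathrm{dom}(\phi)\Rightarrow\exists z\in\mathcal{Z}:\phi(s)^{-1}H=\phi(-s+z)H$. $\phi(S)\cdot x=\{\phi(s)\cdot x:s\in S\}$. $X^{\mathcal{H}}=\{x\in X:\mathrm{Stab}(x)\in\mathcal{H}\}$. Rough rectangles: for a rectangle $B$ with $2\cdot B\subseteq\mathrm{dom}(\phi)$, $x\in X^{\mathcal{H}}$, $0<\delta<1$, a set $R\subseteq X$ is $(\Phi,\delta)$-roughly $B$ at $x$ if $2\cdot\mathcal{Z}\sqsubseteq\delta\cdot B$ and $\phi((1-\delta)\cdot B)\cdot x\subseteq R\subseteq\phi((1+\delta)\cdot B)\cdot x$. Rectangular: for $A$ centered and $0<\epsilon<1$, an equivalence relation $E$ on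 $X$ is $(\Phi,A,\epsilon)$-rectangular if every $E$-class not meeting $X^{\mathcal{H}}$ is a singleton, and for every $E$-class $U$ meeting $X^{\mathcal{H}}$ there are $\delta>0$, a rectangle $B$ and a point $x\in X^{\mathcal{H}}$ such that $U$ is $(\Phi,\delta)$-roughly $B$ at $x$, with $A\sqsubseteq B$, $2^{22\ell}\cdot B\subseteq\mathrm{dom}(\phi)$, and $2\delta\cdot B\sqsubseteq\epsilon\cdot A$. *)

theory Defs
  imports Complex_Main "HOL-Algebra.Group_Action" "HOL-Library.Countable_Set"
begin

text \<open>Elements of Z^l x Gamma are represented as pairs (f, g) with f :: nat => int and
  g in the finite abelian group Gamma (a type of class finite, ab_group_add).
  Membership in Z^l x Gamma means that f vanishes outside {0..<l}.\<close>

type_synonym 'c vec = "(nat \<Rightarrow> int) \<times> 'c"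

definition zvec :: "nat \<Rightarrow> (nat \<Rightarrow> int) \<Rightarrow> bool" where
  "zvec l f \<longleftrightarrow> (\<forall>i\<ge>l. f i = 0)"

definition vzero :: "'c::ab_group_add vec" where
  "vzero = ((\<lambda>_. 0), 0)"

definition vadd :: "'c::ab_group_add vec \<Rightarrow> 'c vec \<Rightarrow> 'c vec" where
  "vadd v w = ((\<lambda>i. fst v i + fst w i), snd v + snd w)"

definition vneg :: "'c::ab_group_add vec \<Rightarrow> 'c vec" where
  "vneg v = ((\<lambda>i. - fst v i), - snd v)"

definition Rec :: "nat \<Rightarrow> (nat \<Rightarrow> real) \<Rightarrow> 'c::ab_group_add vec set" where
  "Rec l a = {b. zvec l (fst b) \<and> (\<forall>i<l. \<bar>real_of_int (fst b i)\<bar> \<le> \<bar>a i\<bar>)}"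

text \<open>The rectangle with center c (in Z^l x {0}) and radius vector a, i.e. c + Rec(a).
  A rectangle B = c + Rec(L(B)) scaled by lambda > 0 is Rect l c (lambda * L(B)).\<close>
definition Rect :: "nat \<Rightarrow> (nat \<Rightarrow> int) \<Rightarrow> (nat \<Rightarrow> real) \<Rightarrow> 'c::ab_group_add vec set" where
  "Rect l c a = (\<lambda>b. vadd (c, 0) b) ` Rec l a"

definition vshift :: "'c::ab_group_add vec set \<Rightarrow> 'c vec \<Rightarrow> 'c vec set" where
  "vshift S v = (\<lambda>s. vadd v s) ` S"

definition phiset :: "('g \<Rightarrow> 'x \<Rightarrow> 'x) \<Rightarrow> ('c vec \<Rightarrow> 'g) \<Rightarrow> 'c vec set \<Rightarrow> 'x \<Rightarrow> 'x set" where
  "phiset act \<phi> S x = {act (\<phi> s) x | s. s \<in> S}"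

definition XH :: "('g, 'm) monoid_scheme \<Rightarrow> 'x set \<Rightarrow> ('g \<Rightarrow> 'x \<Rightarrow> 'x) \<Rightarrow> 'g set set \<Rightarrow> 'x set" where
  "XH G X act \<H> = {x \<in> X. stabilizer G act x \<in> \<H>}"

text \<open>Chart Phi = (l, phi, Z, Gamma, H): Gamma is the type 'c, Z = Rect l 0 z (centered, radius z),
  dom(phi) = Rect l 0 d (centered, radius d).\<close>
definition chart :: "('g, 'm) monoid_scheme \<Rightarrow> nat \<Rightarrow> ('c::{finite,ab_group_add} vec \<Rightarrow> 'g)
    \<Rightarrow> (nat \<Rightarrow> nat) \<Rightarrow> (nat \<Rightarrow> nat) \<Rightarrow> 'g set set \<Rightarrow> bool" where
  "chart G l \<phi> d z \<H> \<longleftrightarrow>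
    (let D = (Rect l (\<lambda>_. 0) (\<lambda>i. real (d i)) :: 'c vec set);
         Z = (Rect l (\<lambda>_. 0) (\<lambda>i. real (z i)) :: 'c vec set) in
     finite \<H> \<and> (\<forall>H\<in>\<H>. subgroup H G) \<and>
     (\<forall>H1\<in>\<H>. \<forall>H2\<in>\<H>. \<exists>g\<in>carrier G. H2 = (\<lambda>h. g \<otimes>\<^bsub>G\<^esub> h \<otimes>\<^bsub>G\<^esub> inv\<^bsub>G\<^esub> g) ` H1) \<and>
     (\<forall>i<l. z i > 0) \<and>
     Rect l (\<lambda>_. 0) (\<lambda>i. 3 * real (z i)) \<subseteq> D \<and>
     \<phi> ` D \<subseteq> carrier G \<and> inj_on \<phi> D \<and> \<phi> vzero = \<one>\<^bsub>G\<^esub> \<and>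
     (\<forall>r\<in>D. \<forall>s\<in>D. \<forall>H\<in>\<H>.
        (\<phi> r <#\<^bsub>G\<^esub> H = \<phi> s <#\<^bsub>G\<^esub> H \<longrightarrow> r = s) \<and>
        (vshift Z (vadd r s) \<subseteq> D \<longrightarrow>
           (\<exists>zz\<in>Z. (\<phi> r \<otimes>\<^bsub>G\<^esub> \<phi> s) <#\<^bsub>G\<^esub> H = \<phi> (vadd (vadd r s) zz) <#\<^bsub>G\<^esub> H)) \<and>
        (vshift Z (vadd r (vneg s)) \<subseteq> D \<longrightarrow>
           (\<exists>zz\<in>Z. (\<phi> r \<otimes>\<^bsub>G\<^esub> inv\<^bsub>G\<^esub> \<phi> s) <#\<^bsub>G\<^esub> H
                     = \<phi> (vadd (vadd r (vneg s)) zz) <#\<^bsub>G\<^esub> H)) \<and>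
        (vshift Z (vadd (vneg r) s) \<subseteq> D \<longrightarrow>
           (\<exists>zz\<in>Z. (inv\<^bsub>G\<^esub> \<phi> r \<otimes>\<^bsub>G\<^esub> \<phi> s) <#\<^bsub>G\<^esub> H
                     = \<phi> (vadd (vadd (vneg r) s) zz) <#\<^bsub>G\<^esub> H)) \<and>
        (vshift Z (vneg s) \<subseteq> D \<longrightarrow>
           (\<exists>zz\<in>Z. (inv\<^bsub>G\<^esub> \<phi> s) <#\<^bsub>G\<^esub> H = \<phi> (vadd (vneg s) zz) <#\<^bsub>G\<^esub> H))))"

text \<open>R is (Phi,delta)-roughly B at x, where B = Rect l c (real o r) (center c, radius vector r).
  The standing requirements of the definition (2B within dom(phi), x in X^H, 0 < delta < 1)
  are included.\<close>
definition roughly :: "('g, 'm) monoid_scheme \<Rightarrow> 'x set \<Rightarrow> ('g \<Rightarrow> 'x \<Rightarrow> 'x) \<Rightarrow> nat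
    \<Rightarrow> ('c::{finite,ab_group_add} vec \<Rightarrow> 'g) \<Rightarrow> (nat \<Rightarrow> nat) \<Rightarrow> (nat \<Rightarrow> nat) \<Rightarrow> 'g set set
    \<Rightarrow> real \<Rightarrow> (nat \<Rightarrow> int) \<Rightarrow> (nat \<Rightarrow> nat) \<Rightarrow> 'x \<Rightarrow> 'x set \<Rightarrow> bool" where
  "roughly G X act l \<phi> d z \<H> \<delta> c r x R \<longleftrightarrow>
     zvec l c \<and>
     (Rect l c (\<lambda>i. 2 * real (r i)) :: 'c vec set) \<subseteq> Rect l (\<lambda>_. 0) (\<lambda>i. real (d i)) \<and>
     x \<in> XH G X act \<H> \<and> 0 < \<delta> \<and> \<delta> < 1 \<and>
     (\<forall>i<l. 2 * real (z i) \<le> \<delta> * real (r i)) \<and>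
     phiset act \<phi> (Rect l c (\<lambda>i. (1 - \<delta>) * real (r i))) x \<subseteq> R \<and>
     R \<subseteq> phiset act \<phi> (Rect l c (\<lambda>i. (1 + \<delta>) * real (r i))) x"

text \<open>E is (Phi, A, epsilon)-rectangular, A the centered rectangle with radius vector a.\<close>
definition rectangular :: "('g, 'm) monoid_scheme \<Rightarrow> 'x set \<Rightarrow> ('g \<Rightarrow> 'x \<Rightarrow> 'x) \<Rightarrow> nat
    \<Rightarrow> ('c::{finite,ab_group_add} vec \<Rightarrow> 'g) \<Rightarrow> (nat \<Rightarrow> nat) \<Rightarrow> (nat \<Rightarrow> nat) \<Rightarrow> 'g set set
    \<Rightarrow> (nat \<Rightarrow> nat) \<Rightarrow> real \<Rightarrow> ('x \<times> 'x) set \<Rightarrow> bool" where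
  "rectangular G X act l \<phi> d z \<H> a \<epsilon> E \<longleftrightarrow>
     equiv X E \<and>
     (\<forall>U \<in> X // E.
        (U \<inter> XH G X act \<H> = {} \<longrightarrow> (\<exists>u. U = {u})) \<and>
        (U \<inter> XH G X act \<H> \<noteq> {} \<longrightarrow>
           (\<exists>\<delta>>0. \<exists>c r. \<exists>x \<in> XH G X act \<H>.
              roughly G X act l \<phi> d z \<H> \<delta> c r x U \<and>
              (\<forall>i<l. a i \<le> r i) \<and>
              (Rect l c (\<lambda>i. 2 ^ (22 * l) * real (r i)) :: 'c vec set)
                 \<subseteq> Rect l (\<lambda>_. 0) (\<lambda>i. real (d i)) \<and>
              (\<forall>i<l. 2 * \<delta> * real (r i) \<le> \<epsilon> * real (a i)))))"

end

theory Submission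
  imports Defs
begin

text \<open>
  By rectangularity \<open>U\<close> is \<open>(\<Phi>,\<delta>)\<close>-roughly \<open>B\<close> at some point \<open>x\<close>. A point \<open>\<phi>(s)\<cdot>y \<in> U\<close> with \<open>s \<in> M\<cdot>A\<close>
  equals \<open>\<phi>(t)\<cdot>x\<close> for some \<open>t \<in> (1+\<delta>)\<cdot>B\<close>, and the chart rule for \<open>\<phi>(t)\<inverse>\<phi>(s)\<close> yields
  \<open>v \<approx> s - t\<close> with \<open>x = \<phi>(v)\<cdot>y\<close>. Since \<open>2\<^sup>2\<^sup>2\<^sup>\<ell>\<cdot>B \<subseteq> dom(\<phi>)\<close> and \<open>M + 8 \<le> 2\<^sup>2\<^sup>2\<^sup>\<ell>\<close>, every
  rectangle met along the way stays inside \<open>dom(\<phi>)\<close>. Passing between \<open>x\<close> and \<open>y\<close> through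
  \<open>\<phi>(u)\<phi>(v)\<inverse> \<approx> \<phi>(u - v)\<close> and \<open>\<phi>(t)\<phi>(v) \<approx> \<phi>(t + v)\<close> costs an error in \<open>\<Z>\<close>, at most
  \<open>\<delta>/2\<close> times the radius in each coordinate; hence \<open>U\<close> is \<open>(\<Phi>,2\<delta>)\<close>-roughly \<open>B + v\<close> at \<open>y\<close>.
\<close>

lemma mem_Rect_iff:
  "w \<in> Rect l c \<rho> \<longleftrightarrow> zvec l (\<lambda>i. fst w i - c i) \<and>
     (\<forall>i<l. \<bar>real_of_int (fst w i) - real_of_int (c i)\<bar> \<le> \<bar>\<rho> i\<bar>)"
proof
  assume "w \<in> Rect l c \<rho>"
  then obtain b where "b \<in> Rec l \<rho>" "w = vadd (c, 0) b"
    unfolding Rect_def by auto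
  then show "zvec l (\<lambda>i. fst w i - c i) \<and>
     (\<forall>i<l. \<bar>real_of_int (fst w i) - real_of_int (c i)\<bar> \<le> \<bar>\<rho> i\<bar>)"
    by (auto simp: vadd_def Rec_def)
next
  assume "zvec l (\<lambda>i. fst w i - c i) \<and>
     (\<forall>i<l. \<bar>real_of_int (fst w i) - real_of_int (c i)\<bar> \<le> \<bar>\<rho> i\<bar>)"
  then have "((\<lambda>i. fst w i - c i), snd w) \<in> Rec l \<rho>"
    by (auto simp: Rec_def)
  moreover have "w = vadd (c, 0) ((\<lambda>i. fst w i - c i), snd w)"
    by (simp add: vadd_def)
  ultimately show "w \<in> Rect l c \<rho>"
    unfolding Rect_def by blast
qed

lemma Rect_abs [simp]: "Rect l c (\<lambda>i. \<bar>\<rho> i\<bar>) = Rect l c \<rho>"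
  by (simp add: Rect_def Rec_def)

lemma self_mem_Rect: "zvec l (fst p) \<Longrightarrow> p \<in> Rect l (fst p) \<rho>"
  by (simp add: mem_Rect_iff zvec_def)

lemma Rect_vadd:
  assumes "w \<in> Rect l c \<rho>" and "w' \<in> Rect l c' \<rho>'"
  shows "vadd w w' \<in> Rect l (\<lambda>i. c i + c' i) (\<lambda>i. \<bar>\<rho> i\<bar> + \<bar>\<rho>' i\<bar>)"
proof -
  have "\<bar>real_of_int (fst w i + fst w' i) - real_of_int (c i + c' i)\<bar> \<le> \<bar>\<rho> i\<bar> + \<bar>\<rho>' i\<bar>"
    if "i < l" for i
  proof -
    have "\<bar>real_of_int (fst w i) - c i\<bar> \<le> \<bar>\<rho> i\<bar>" "\<bar>real_of_int (fst w' i) - c' i\<bar> \<le> \<bar>\<rho>' i\<bar>"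
      using assms that by (auto simp: mem_Rect_iff)
    then show ?thesis
      using abs_triangle_ineq[of "real_of_int (fst w i) - c i" "real_of_int (fst w' i) - c' i"]
      by (simp add: add_diff_add)
  qed
  with assms show ?thesis
    by (auto simp: mem_Rect_iff zvec_def vadd_def)
qed

lemma Rect_vneg: "w \<in> Rect l c \<rho> \<Longrightarrow> vneg w \<in> Rect l (\<lambda>i. - c i) \<rho>"
  by (auto simp: mem_Rect_iff zvec_def vneg_def abs_minus_commute)

lemma vshift_centered_Rect_subset:
  assumes "p \<in> Rect l c \<rho>"
  shows "vshift (Rect l (\<lambda>_. 0) \<zeta>) p \<subseteq> Rect l c (\<lambda>i. \<bar>\<rho> i\<bar> + \<bar>\<zeta> i\<bar>)"
  using Rect_vadd[OF assms, of _ "\<lambda>_. 0" \<zeta>] by (auto simp: vshift_def)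

lemma Rect_mono:
  "(\<And>i. i < l \<Longrightarrow> \<bar>\<rho> i\<bar> \<le> \<bar>\<rho>' i\<bar>) \<Longrightarrow> Rect l c \<rho> \<subseteq> Rect l c \<rho>'"
  by (force simp: mem_Rect_iff)

lemma Rect_scale_mono:
  "0 \<le> \<kappa> \<Longrightarrow> \<kappa> \<le> \<kappa>' \<Longrightarrow> Rect l c (\<lambda>i. \<kappa> * real (r i)) \<subseteq> Rect l c (\<lambda>i. \<kappa>' * real (r i))"
  by (intro Rect_mono) (simp add: abs_mult mult_right_mono)

lemma Rect_subset_Rect:
  assumes "zvec l c" and "zvec l c'"
    and "\<And>i. i < l \<Longrightarrow> \<bar>real_of_int (c i) - real_of_int (c' i)\<bar> + \<bar>\<rho> i\<bar> \<le> \<bar>\<rho>' i\<bar>"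
  shows "(Rect l c \<rho> :: 'c::ab_group_add vec set) \<subseteq> Rect l c' \<rho>'"
proof
  fix w assume w: "w \<in> Rect l c \<rho>"
  have "\<bar>real_of_int (fst w i) - real_of_int (c' i)\<bar> \<le> \<bar>\<rho>' i\<bar>" if "i < l" for i
    using w that assms(3)[OF that]
      abs_triangle_ineq[of "real_of_int (fst w i) - c i" "real_of_int (c i) - c' i"]
    by (fastforce simp: mem_Rect_iff)
  with w assms(1,2) show "w \<in> Rect l c' \<rho>'"
    by (auto simp: mem_Rect_iff zvec_def)
qed

lemma Rect_subset_centered_Rect_bound:
  assumes "zvec l c"
    and "(Rect l c (\<lambda>i. real (\<rho> i)) :: 'c::ab_group_add vec set) \<subseteq> Rect l (\<lambda>_. 0) (\<lambda>i. real (d i))"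
    and "i < l"
  shows "\<bar>real_of_int (c i)\<bar> + real (\<rho> i) \<le> real (d i)"
proof -
  define w :: "'c vec" where
    "w = ((\<lambda>j. if j < l then (if 0 \<le> c j then c j + int (\<rho> j) else c j - int (\<rho> j)) else 0), 0)"
  have "w \<in> Rect l c (\<lambda>i. real (\<rho> i))"
    using assms(1) by (auto simp: mem_Rect_iff w_def zvec_def)
  then have "\<bar>real_of_int (fst w i)\<bar> \<le> real (d i)"
    using assms(2,3) by (force simp: mem_Rect_iff)
  then show ?thesis
    using assms(3) by (auto simp: w_def split: if_splits)
qed

abbreviation centered_Rect :: "nat \<Rightarrow> (nat \<Rightarrow> nat) \<Rightarrow> 'c::ab_group_add vec set" where
  "centered_Rect l \<rho> \<equiv> Rect l (\<lambda>_. 0) (\<lambda>i. real (\<rho> i))"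

lemma act_eq_if_lcoset_stabilizer_eq:
  assumes "group_action G X act" "x \<in> X" "g \<in> carrier G" "g' \<in> carrier G"
    and "g <#\<^bsub>G\<^esub> stabilizer G act x = g' <#\<^bsub>G\<^esub> stabilizer G act x"
  shows "act g x = act g' x"
proof -
  interpret group_action G X act by fact
  interpret group G using group_hom group_hom.axioms(1) by blast
  have "g' \<in> g' <#\<^bsub>G\<^esub> stabilizer G act x"
    using assms(4) stabilizer_one_closed[OF assms(2)] unfolding l_coset_def by force
  then obtain h where h: "h \<in> stabilizer G act x" "g' = g \<otimes>\<^bsub>G\<^esub> h"
    using assms(5) unfolding l_coset_def by auto
  then have "h \<in> carrier G" "act h x = x"
    unfolding stabilizer_def by auto
  with h(2) show ?thesis
    using composition_rule[OF assms(2) assms(3)] by simp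
qed

lemma chart_phi_carrier:
  "chart G l \<phi> d z \<H> \<Longrightarrow> r \<in> centered_Rect l d \<Longrightarrow> \<phi> r \<in> carrier G"
  unfolding chart_def Let_def by blast

lemma chart_act_from_lcoset:
  assumes "group_action G X act" "chart G l \<phi> d z \<H>" "x \<in> X"
    and "g \<in> carrier G" "vshift (centered_Rect l z) p \<subseteq> centered_Rect l d"
    and "\<exists>zz \<in> centered_Rect l z.
           g <#\<^bsub>G\<^esub> stabilizer G act x = \<phi> (vadd p zz) <#\<^bsub>G\<^esub> stabilizer G act x"
  obtains w where "w \<in> vshift (centered_Rect l z) p" "act g x = act (\<phi> w) x"
proof -
  from assms(6) obtain zz where zz: "zz \<in> centered_Rect l z"
    "g <#\<^bsub>G\<^esub> stabilizer G act x = \<phi> (vadd p zz) <#\<^bsub>G\<^esub> stabilizer G act x" ..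
  have "vadd p zz \<in> vshift (centered_Rect l z) p"
    using zz(1) unfolding vshift_def by blast
  moreover have "act g x = act (\<phi> (vadd p zz)) x"
    using act_eq_if_lcoset_stabilizer_eq[OF assms(1,3,4) _ zz(2)] assms(2,5) calculation
      chart_phi_carrier by blast
  ultimately show thesis ..
qed

lemma chart_act_mult:
  fixes \<phi> :: "'c::{finite,ab_group_add} vec \<Rightarrow> 'g"
  assumes "group_action G X act" "chart G l \<phi> d z \<H>" "x \<in> XH G X act \<H>"
    and "r \<in> centered_Rect l d" "s \<in> centered_Rect l d"
    and "vshift (centered_Rect l z) (vadd r s) \<subseteq> centered_Rect l d"
  obtains w where "w \<in> vshift (centered_Rect l z) (vadd r s)"
    "act (\<phi> r) (act (\<phi> s) x) = act (\<phi> w) x"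
proof -
  interpret group_action G X act by fact
  interpret group G using group_hom group_hom.axioms(1) by blast
  have x: "x \<in> X" "stabilizer G act x \<in> \<H>" using assms(3) unfolding XH_def by auto
  have \<phi>: "\<phi> r \<in> carrier G" "\<phi> s \<in> carrier G"
    using assms(2,4,5) chart_phi_carrier by blast+
  obtain w where "w \<in> vshift (centered_Rect l z) (vadd r s)"
      "act (\<phi> r \<otimes>\<^bsub>G\<^esub> \<phi> s) x = act (\<phi> w) x"
  proof (rule chart_act_from_lcoset[OF assms(1,2) x(1) _ assms(6)])
    show "\<phi> r \<otimes>\<^bsub>G\<^esub> \<phi> s \<in> carrier G" using \<phi> by simp
    show "\<exists>zz \<in> centered_Rect l z. (\<phi> r \<otimes>\<^bsub>G\<^esub> \<phi> s) <#\<^bsub>G\<^esub> stabilizer G act x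
            = \<phi> (vadd (vadd r s) zz) <#\<^bsub>G\<^esub> stabilizer G act x"
      using assms(2,4,5,6) x(2) unfolding chart_def Let_def by blast
  qed
  with that show thesis using composition_rule[OF x(1) \<phi>] by simp
qed

lemma chart_act_mult_inv:
  fixes \<phi> :: "'c::{finite,ab_group_add} vec \<Rightarrow> 'g"
  assumes "group_action G X act" "chart G l \<phi> d z \<H>" "x \<in> XH G X act \<H>"
    and "r \<in> centered_Rect l d" "s \<in> centered_Rect l d"
    and "vshift (centered_Rect l z) (vadd r (vneg s)) \<subseteq> centered_Rect l d"
  obtains w where "w \<in> vshift (centered_Rect l z) (vadd r (vneg s))"
    "act (\<phi> r) (act (inv\<^bsub>G\<^esub> \<phi> s) x) = act (\<phi> w) x"
proof -
  interpret group_action G X act by fact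
  interpret group G using group_hom group_hom.axioms(1) by blast
  have x: "x \<in> X" "stabilizer G act x \<in> \<H>" using assms(3) unfolding XH_def by auto
  have \<phi>: "\<phi> r \<in> carrier G" "inv\<^bsub>G\<^esub> \<phi> s \<in> carrier G"
    using assms(2,4,5) chart_phi_carrier by blast+
  obtain w where "w \<in> vshift (centered_Rect l z) (vadd r (vneg s))"
      "act (\<phi> r \<otimes>\<^bsub>G\<^esub> inv\<^bsub>G\<^esub> \<phi> s) x = act (\<phi> w) x"
  proof (rule chart_act_from_lcoset[OF assms(1,2) x(1) _ assms(6)])
    show "\<phi> r \<otimes>\<^bsub>G\<^esub> inv\<^bsub>G\<^esub> \<phi> s \<in> carrier G" using \<phi> by simp
    show "\<exists>zz \<in> centered_Rect l z. (\<phi> r \<otimes>\<^bsub>G\<^esub> inv\<^bsub>G\<^esub> \<phi> s) <#\<^bsub>G\<^esub> stabilizer G act x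
            = \<phi> (vadd (vadd r (vneg s)) zz) <#\<^bsub>G\<^esub> stabilizer G act x"
      using assms(2,4,5,6) x(2) unfolding chart_def Let_def by blast
  qed
  with that show thesis using composition_rule[OF x(1) \<phi>] by simp
qed

lemma chart_act_inv_mult:
  fixes \<phi> :: "'c::{finite,ab_group_add} vec \<Rightarrow> 'g"
  assumes "group_action G X act" "chart G l \<phi> d z \<H>" "x \<in> XH G X act \<H>"
    and "r \<in> centered_Rect l d" "s \<in> centered_Rect l d"
    and "vshift (centered_Rect l z) (vadd (vneg r) s) \<subseteq> centered_Rect l d"
  obtains w where "w \<in> vshift (centered_Rect l z) (vadd (vneg r) s)"
    "act (inv\<^bsub>G\<^esub> \<phi> r) (act (\<phi> s) x) = act (\<phi> w) x"
proof -
  interpret group_action G X act by fact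
  interpret group G using group_hom group_hom.axioms(1) by blast
  have x: "x \<in> X" "stabilizer G act x \<in> \<H>" using assms(3) unfolding XH_def by auto
  have \<phi>: "inv\<^bsub>G\<^esub> \<phi> r \<in> carrier G" "\<phi> s \<in> carrier G"
    using assms(2,4,5) chart_phi_carrier by blast+
  obtain w where "w \<in> vshift (centered_Rect l z) (vadd (vneg r) s)"
      "act (inv\<^bsub>G\<^esub> \<phi> r \<otimes>\<^bsub>G\<^esub> \<phi> s) x = act (\<phi> w) x"
  proof (rule chart_act_from_lcoset[OF assms(1,2) x(1) _ assms(6)])
    show "inv\<^bsub>G\<^esub> \<phi> r \<otimes>\<^bsub>G\<^esub> \<phi> s \<in> carrier G" using \<phi> by simp
    show "\<exists>zz \<in> centered_Rect l z. (inv\<^bsub>G\<^esub> \<phi> r \<otimes>\<^bsub>G\<^esub> \<phi> s) <#\<^bsub>G\<^esub> stabilizer G act x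
            = \<phi> (vadd (vadd (vneg r) s) zz) <#\<^bsub>G\<^esub> stabilizer G act x"
      using assms(2,4,5,6) x(2) unfolding chart_def Let_def by blast
  qed
  with that show thesis using composition_rule[OF x(1) \<phi>] by simp
qed

lemma roughly_z_le:
  "roughly G X act l \<phi> d z \<H> \<delta> c r x U \<Longrightarrow> i < l \<Longrightarrow> real (z i) \<le> \<delta> * real (r i)"
  unfolding roughly_def by (smt (verit) of_nat_0_le_iff)

lemma roughly_translate_inner:
  fixes \<phi> :: "'c::{finite,ab_group_add} vec \<Rightarrow> 'g"
  assumes ga: "group_action G X act" and chart: "chart G l \<phi> d z \<H>"
    and rough: "roughly G X act l \<phi> d z \<H> \<delta> c r x U" and "2 * \<delta> < 1"
    and y: "y \<in> XH G X act \<H>" and v: "v \<in> centered_Rect l d" and x: "x = act (\<phi> v) y"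
    and dom: "(Rect l (\<lambda>i. c i + fst v i) (\<lambda>i. 2 * real (r i)) :: 'c vec set) \<subseteq> centered_Rect l d"
  shows "phiset act \<phi> (Rect l (\<lambda>i. c i + fst v i) (\<lambda>i. (1 - 2 * \<delta>) * real (r i))) y \<subseteq> U"
proof
  interpret group_action G X act by fact
  have dom_c: "(Rect l c (\<lambda>i. 2 * real (r i)) :: 'c vec set) \<subseteq> centered_Rect l d"
    and xH: "x \<in> XH G X act \<H>" and "0 < \<delta>"
    and inner: "phiset act \<phi> (Rect l c (\<lambda>i. (1 - \<delta>) * real (r i))) x \<subseteq> U"
    using rough unfolding roughly_def by blast+
  fix p assume "p \<in> phiset act \<phi> (Rect l (\<lambda>i. c i + fst v i) (\<lambda>i. (1 - 2 * \<delta>) * real (r i))) y"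
  then obtain u where u: "u \<in> Rect l (\<lambda>i. c i + fst v i) (\<lambda>i. (1 - 2 * \<delta>) * real (r i))"
    and p: "p = act (\<phi> u) y" unfolding phiset_def by blast
  have "vneg v \<in> Rect l (\<lambda>i. - fst v i) (\<lambda>_. 0)"
    using v self_mem_Rect[of l "vneg v"] by (auto simp: mem_Rect_iff vneg_def zvec_def)
  from Rect_vadd[OF u this]
  have "vadd u (vneg v) \<in> Rect l c (\<lambda>i. (1 - 2 * \<delta>) * real (r i))"
    by simp
  then have "vshift (centered_Rect l z) (vadd u (vneg v))
      \<subseteq> Rect l c (\<lambda>i. \<bar>(1 - 2 * \<delta>) * real (r i)\<bar> + \<bar>real (z i)\<bar>)"
    by (rule vshift_centered_Rect_subset)
  also have "\<dots> \<subseteq> Rect l c (\<lambda>i. (1 - \<delta>) * real (r i))"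
    using roughly_z_le[OF rough] \<open>2 * \<delta> < 1\<close> \<open>0 < \<delta>\<close>
    by (intro Rect_mono) (simp add: abs_mult; simp add: algebra_simps)
  finally have w_inner: "vshift (centered_Rect l z) (vadd u (vneg v))
      \<subseteq> Rect l c (\<lambda>i. (1 - \<delta>) * real (r i))" .
  then have w_dom: "vshift (centered_Rect l z) (vadd u (vneg v)) \<subseteq> centered_Rect l d"
    using Rect_scale_mono[of "1 - \<delta>" 2 l c r] dom_c \<open>0 < \<delta>\<close> \<open>2 * \<delta> < 1\<close> by force
  have "u \<in> centered_Rect l d"
    using u dom Rect_scale_mono[of "1 - 2 * \<delta>" 2 l "\<lambda>i. c i + fst v i" r] \<open>0 < \<delta>\<close> \<open>2 * \<delta> < 1\<close>
    by auto
  then obtain w where w: "w \<in> vshift (centered_Rect l z) (vadd u (vneg v))"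
    and act_w: "act (\<phi> u) (act (inv\<^bsub>G\<^esub> \<phi> v) x) = act (\<phi> w) x"
    using chart_act_mult_inv[OF ga chart xH _ v w_dom] by blast
  have "act (inv\<^bsub>G\<^esub> \<phi> v) x = y"
    using orbit_sym_aux chart_phi_carrier[OF chart v] y x unfolding XH_def by blast
  then show "p \<in> U"
    using act_w p w w_inner inner unfolding phiset_def by blast
qed

lemma roughly_translate_outer:
  fixes \<phi> :: "'c::{finite,ab_group_add} vec \<Rightarrow> 'g"
  assumes ga: "group_action G X act" and chart: "chart G l \<phi> d z \<H>"
    and rough: "roughly G X act l \<phi> d z \<H> \<delta> c r x U" and "2 * \<delta> < 1"
    and y: "y \<in> XH G X act \<H>" and v: "v \<in> centered_Rect l d" and x: "x = act (\<phi> v) y"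
    and dom: "(Rect l (\<lambda>i. c i + fst v i) (\<lambda>i. 2 * real (r i)) :: 'c vec set) \<subseteq> centered_Rect l d"
  shows "U \<subseteq> phiset act \<phi> (Rect l (\<lambda>i. c i + fst v i) (\<lambda>i. (1 + 2 * \<delta>) * real (r i))) y"
proof
  have dom_c: "(Rect l c (\<lambda>i. 2 * real (r i)) :: 'c vec set) \<subseteq> centered_Rect l d"
    and "0 < \<delta>" and outer: "U \<subseteq> phiset act \<phi> (Rect l c (\<lambda>i. (1 + \<delta>) * real (r i))) x"
    using rough unfolding roughly_def by blast+
  fix q assume "q \<in> U"
  then obtain t where t: "t \<in> Rect l c (\<lambda>i. (1 + \<delta>) * real (r i))" and q: "q = act (\<phi> t) x"
    using outer unfolding phiset_def by blast
  have "v \<in> Rect l (fst v) (\<lambda>_. 0)"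
    using v self_mem_Rect by (auto simp: mem_Rect_iff zvec_def)
  from Rect_vadd[OF t this]
  have "vadd t v \<in> Rect l (\<lambda>i. c i + fst v i) (\<lambda>i. (1 + \<delta>) * real (r i))"
    by simp
  then have "vshift (centered_Rect l z) (vadd t v)
      \<subseteq> Rect l (\<lambda>i. c i + fst v i) (\<lambda>i. \<bar>(1 + \<delta>) * real (r i)\<bar> + \<bar>real (z i)\<bar>)"
    by (rule vshift_centered_Rect_subset)
  also have "\<dots> \<subseteq> Rect l (\<lambda>i. c i + fst v i) (\<lambda>i. (1 + 2 * \<delta>) * real (r i))"
    using roughly_z_le[OF rough] \<open>0 < \<delta>\<close>
    by (intro Rect_mono) (simp add: abs_mult; simp add: algebra_simps)
  finally have w_outer: "vshift (centered_Rect l z) (vadd t v)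
      \<subseteq> Rect l (\<lambda>i. c i + fst v i) (\<lambda>i. (1 + 2 * \<delta>) * real (r i))" .
  then have w_dom: "vshift (centered_Rect l z) (vadd t v) \<subseteq> centered_Rect l d"
    using Rect_scale_mono[of "1 + 2 * \<delta>" 2 l "\<lambda>i. c i + fst v i" r] dom \<open>0 < \<delta>\<close> \<open>2 * \<delta> < 1\<close>
    by force
  have "t \<in> centered_Rect l d"
    using t dom_c Rect_scale_mono[of "1 + \<delta>" 2 l c r] \<open>0 < \<delta>\<close> \<open>2 * \<delta> < 1\<close> by auto
  then obtain w where w: "w \<in> vshift (centered_Rect l z) (vadd t v)"
    and act_w: "act (\<phi> t) (act (\<phi> v) y) = act (\<phi> w) y"
    using chart_act_mult[OF ga chart y _ v w_dom] by blast
  show "q \<in> phiset act \<phi> (Rect l (\<lambda>i. c i + fst v i) (\<lambda>i. (1 + 2 * \<delta>) * real (r i))) y"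
    using act_w q x w w_outer unfolding phiset_def by blast
qed

lemma roughly_translate:
  fixes \<phi> :: "'c::{finite,ab_group_add} vec \<Rightarrow> 'g"
  assumes "group_action G X act" and "chart G l \<phi> d z \<H>"
    and rough: "roughly G X act l \<phi> d z \<H> \<delta> c r x U" and "2 * \<delta> < 1"
    and y: "y \<in> XH G X act \<H>" and v: "v \<in> centered_Rect l d" and "x = act (\<phi> v) y"
    and dom: "(Rect l (\<lambda>i. c i + fst v i) (\<lambda>i. 2 * real (r i)) :: 'c vec set) \<subseteq> centered_Rect l d"
  shows "roughly G X act l \<phi> d z \<H> (2 * \<delta>) (\<lambda>i. c i + fst v i) r y U"
proof -
  have "zvec l c" and "0 < \<delta>"
    using rough unfolding roughly_def by blast+
  moreover have "zvec l (fst v)"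
    using v by (simp add: mem_Rect_iff)
  ultimately show ?thesis
    using roughly_translate_inner[OF assms] roughly_translate_outer[OF assms]
      roughly_z_le[OF rough] dom y \<open>2 * \<delta> < 1\<close>
    unfolding roughly_def by (auto simp: zvec_def)
qed

lemma roughly_base_point_eq_act:
  fixes \<phi> :: "'c::{finite,ab_group_add} vec \<Rightarrow> 'g"
  assumes ga: "group_action G X act" and chart: "chart G l \<phi> d z \<H>"
    and rough: "roughly G X act l \<phi> d z \<H> \<delta> c r x U" and y: "y \<in> XH G X act \<H>"
    and s: "s \<in> Rect l (\<lambda>_. 0) \<sigma>" "s \<in> centered_Rect l d" "act (\<phi> s) y \<in> U"
    and dom: "(Rect l (\<lambda>i. - c i) (\<lambda>i. (1 + \<delta>) * real (r i) + \<bar>\<sigma> i\<bar> + real (z i)) :: 'c vec set)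
      \<subseteq> centered_Rect l d"
  obtains v where "v \<in> Rect l (\<lambda>i. - c i) (\<lambda>i. (1 + \<delta>) * real (r i) + \<bar>\<sigma> i\<bar> + real (z i))"
    and "x = act (\<phi> v) y"
proof -
  interpret group_action G X act by fact
  have dom_c: "(Rect l c (\<lambda>i. 2 * real (r i)) :: 'c vec set) \<subseteq> centered_Rect l d"
    and "x \<in> XH G X act \<H>" and "0 < \<delta>" "\<delta> < 1"
    and outer: "U \<subseteq> phiset act \<phi> (Rect l c (\<lambda>i. (1 + \<delta>) * real (r i))) x"
    using rough unfolding roughly_def by blast+
  obtain t where t: "t \<in> Rect l c (\<lambda>i. (1 + \<delta>) * real (r i))" and st: "act (\<phi> s) y = act (\<phi> t) x"
    using s(3) outer unfolding phiset_def by blast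
  have t_dom: "t \<in> centered_Rect l d"
    using t dom_c Rect_scale_mono[of "1 + \<delta>" 2 l c r] \<open>0 < \<delta>\<close> \<open>\<delta> < 1\<close> by force
  have "vadd (vneg t) s \<in> Rect l (\<lambda>i. - c i) (\<lambda>i. \<bar>(1 + \<delta>) * real (r i)\<bar> + \<bar>\<sigma> i\<bar>)"
    using Rect_vadd[OF Rect_vneg[OF t] s(1)] by simp
  then have "vshift (centered_Rect l z) (vadd (vneg t) s)
      \<subseteq> Rect l (\<lambda>i. - c i) (\<lambda>i. \<bar>\<bar>(1 + \<delta>) * real (r i)\<bar> + \<bar>\<sigma> i\<bar>\<bar> + \<bar>real (z i)\<bar>)"
    by (rule vshift_centered_Rect_subset)
  also have "\<dots> = Rect l (\<lambda>i. - c i) (\<lambda>i. (1 + \<delta>) * real (r i) + \<bar>\<sigma> i\<bar> + real (z i))"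
    using \<open>0 < \<delta>\<close> by (simp add: abs_mult)
  finally have w_near: "vshift (centered_Rect l z) (vadd (vneg t) s)
      \<subseteq> Rect l (\<lambda>i. - c i) (\<lambda>i. (1 + \<delta>) * real (r i) + \<bar>\<sigma> i\<bar> + real (z i))" .
  obtain w where w: "w \<in> vshift (centered_Rect l z) (vadd (vneg t) s)"
    and act_w: "act (inv\<^bsub>G\<^esub> \<phi> t) (act (\<phi> s) y) = act (\<phi> w) y"
    using chart_act_inv_mult[OF ga chart y t_dom s(2)] w_near dom by blast
  have "act (inv\<^bsub>G\<^esub> \<phi> t) (act (\<phi> t) x) = x"
    using orbit_sym_aux t_dom chart chart_phi_carrier \<open>x \<in> XH G X act \<H>\<close>
    unfolding XH_def by blast
  with act_w st have "x = act (\<phi> w) y"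
    by simp
  with w w_near show thesis
    using that by blast
qed

lemma roughly_base_point_eq_act_in_dom:
  fixes \<phi> :: "'c::{finite,ab_group_add} vec \<Rightarrow> 'g"
  assumes ga: "group_action G X act" and chart: "chart G l \<phi> d z \<H>"
    and rough: "roughly G X act l \<phi> d z \<H> \<delta> c r x U" and "2 * \<delta> < 1"
    and y: "y \<in> XH G X act \<H>"
    and s: "s \<in> Rect l (\<lambda>_. 0) \<sigma>" "act (\<phi> s) y \<in> U"
    and big: "(Rect l c (\<lambda>i. real N * real (r i)) :: 'c vec set) \<subseteq> centered_Rect l d"
    and \<sigma>: "\<And>i. i < l \<Longrightarrow> \<bar>\<sigma> i\<bar> + 4 * real (r i) \<le> real N * real (r i)"
  obtains v where "v \<in> centered_Rect l d" and "x = act (\<phi> v) y"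
    and "(Rect l (\<lambda>i. c i + fst v i) (\<lambda>i. 2 * real (r i)) :: 'c vec set) \<subseteq> centered_Rect l d"
proof -
  have c: "zvec l c" and "0 < \<delta>" and z: "\<forall>i<l. 2 * real (z i) \<le> \<delta> * real (r i)"
    using rough unfolding roughly_def by blast+
  have c_bound: "\<bar>real_of_int (c i)\<bar> + real N * real (r i) \<le> real (d i)" if "i < l" for i
    using Rect_subset_centered_Rect_bound[OF c _ that, of "\<lambda>i. N * r i" d] big by simp
  define \<rho> where "\<rho> i = (1 + \<delta>) * real (r i) + \<bar>\<sigma> i\<bar> + real (z i)" for i
  have \<rho>_nonneg: "0 \<le> \<rho> i" and \<sigma>_le_\<rho>: "\<bar>\<sigma> i\<bar> \<le> \<rho> i" for i
    using \<open>0 < \<delta>\<close> by (simp_all add: \<rho>_def)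
  have \<rho>_bound: "\<rho> i + 2 * real (r i) \<le> real N * real (r i)" if "i < l" for i
  proof -
    have "2 * \<delta> * real (r i) \<le> 1 * real (r i)"
      using \<open>2 * \<delta> < 1\<close> by (intro mult_right_mono) auto
    then show ?thesis
      using \<sigma>[OF that] z[rule_format, OF that] unfolding \<rho>_def by (simp add: algebra_simps)
  qed
  have near_dom: "(Rect l (\<lambda>i. - c i) \<rho> :: 'c vec set) \<subseteq> centered_Rect l d"
  proof (rule Rect_subset_Rect)
    show "\<bar>real_of_int (- c i) - real_of_int 0\<bar> + \<bar>\<rho> i\<bar> \<le> \<bar>real (d i)\<bar>" if "i < l" for i
      using c_bound[OF that] \<rho>_bound[OF that] \<rho>_nonneg[of i] by simp
  qed (use c in \<open>simp_all add: zvec_def\<close>)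
  have s_dom: "s \<in> centered_Rect l d"
  proof (rule subsetD[OF Rect_subset_Rect s(1)])
    show "\<bar>real_of_int 0 - real_of_int 0\<bar> + \<bar>\<sigma> i\<bar> \<le> \<bar>real (d i)\<bar>" if "i < l" for i
      using c_bound[OF that] \<rho>_bound[OF that] \<sigma>_le_\<rho>[of i] by simp
  qed (simp_all add: zvec_def)
  obtain v where v: "v \<in> Rect l (\<lambda>i. - c i) \<rho>" and x_v: "x = act (\<phi> v) y"
    using roughly_base_point_eq_act[OF ga chart rough y s(1) s_dom s(2)] near_dom
    unfolding \<rho>_def by blast
  have "(Rect l (\<lambda>i. c i + fst v i) (\<lambda>i. 2 * real (r i)) :: 'c vec set) \<subseteq> centered_Rect l d"
  proof (rule Rect_subset_Rect)
    show "zvec l (\<lambda>i. c i + fst v i)"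
      using v by (simp add: mem_Rect_iff zvec_def add.commute)
    show "\<bar>real_of_int (c i + fst v i) - real_of_int 0\<bar> + \<bar>2 * real (r i)\<bar> \<le> \<bar>real (d i)\<bar>"
      if "i < l" for i
      using v that c_bound[OF that] \<rho>_bound[OF that] \<rho>_nonneg[of i]
      by (fastforce simp: mem_Rect_iff add.commute)
  qed (simp add: zvec_def)
  with v near_dom x_v show thesis
    using that by blast
qed

lemma roughly_twice_delta_lt_one:
  assumes "chart G l \<phi> d z \<H>" and "0 < l" and "roughly G X act l \<phi> d z \<H> \<delta> c r x U"
    and "\<forall>i<l. a i \<le> r i" and "\<forall>i<l. 2 * \<delta> * real (r i) \<le> \<epsilon> * real (a i)"
    and "0 < \<epsilon>" and "\<epsilon> < 1"
  shows "2 * \<delta> < 1"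
proof -
  have "0 < z 0" "2 * real (z 0) \<le> \<delta> * real (r 0)" "0 < \<delta>"
    using assms(1-3) unfolding chart_def roughly_def Let_def by auto
  then have "0 < \<delta> * real (r 0)"
    by linarith
  then have r0: "0 < real (r 0)"
    by (simp add: zero_less_mult_iff)
  have "2 * \<delta> * real (r 0) \<le> \<epsilon> * real (r 0)"
    using assms(2,4,5,6) by (force intro: order_trans mult_left_mono)
  also have "\<dots> < 1 * real (r 0)"
    using assms(7) r0 by simp
  finally show ?thesis using r0 by simp
qed

lemma rectangularE:
  fixes \<phi> :: "'c::{finite,ab_group_add} vec \<Rightarrow> 'g"
  assumes "rectangular G X act l \<phi> d z \<H> a \<epsilon> E" and "chart G l \<phi> d z \<H>" and "0 < l"
    and "0 < \<epsilon>" and "\<epsilon> < 1" and "U \<in> X // E" and "U \<inter> XH G X act \<H> \<noteq> {}"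
  obtains \<delta> c r x where "0 < \<delta>" and "2 * \<delta> < 1" and "roughly G X act l \<phi> d z \<H> \<delta> c r x U"
    and "\<forall>i<l. a i \<le> r i"
    and "(Rect l c (\<lambda>i. 2 ^ (22 * l) * real (r i)) :: 'c vec set) \<subseteq> centered_Rect l d"
    and "\<forall>i<l. 2 * \<delta> * real (r i) \<le> \<epsilon> * real (a i)"
proof -
  have "\<exists>\<delta>>0. \<exists>c r. \<exists>x \<in> XH G X act \<H>. roughly G X act l \<phi> d z \<H> \<delta> c r x U \<and>
      (\<forall>i<l. a i \<le> r i) \<and>
      (Rect l c (\<lambda>i. 2 ^ (22 * l) * real (r i)) :: 'c vec set) \<subseteq> centered_Rect l d \<and>
      (\<forall>i<l. 2 * \<delta> * real (r i) \<le> \<epsilon> * real (a i))"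
    using assms(1,6,7) unfolding rectangular_def by blast
  then obtain \<delta> c r x where "0 < \<delta>" and rough: "roughly G X act l \<phi> d z \<H> \<delta> c r x U"
    and a_r: "\<forall>i<l. a i \<le> r i"
    and "(Rect l c (\<lambda>i. 2 ^ (22 * l) * real (r i)) :: 'c vec set) \<subseteq> centered_Rect l d"
    and eps: "\<forall>i<l. 2 * \<delta> * real (r i) \<le> \<epsilon> * real (a i)"
    by blast
  moreover have "2 * \<delta> < 1"
    using roughly_twice_delta_lt_one[OF assms(2,3) rough a_r eps assms(4,5)] .
  ultimately show thesis
    using that by blast
qed

lemma scaled_radius_bound:
  fixes M N :: real
  assumes "0 < M" and "M \<le> N - 8" and "a \<le> r"
  shows "\<bar>M * real a\<bar> + 4 * real r \<le> N * real r"
proof -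
  have "M * real a \<le> M * real r"
    using assms(1,3) by (simp add: mult_left_mono)
  moreover have "(M + 4) * real r \<le> N * real r"
    using assms(2) by (intro mult_right_mono) auto
  moreover have "\<bar>M * real a\<bar> = M * real a"
    using assms(1) by simp
  ultimately show ?thesis
    by (simp only: distrib_right)
qed

theorem lemma5p4:
  fixes G :: "('g, 'm) monoid_scheme" and X :: "'x set" and act :: "'g \<Rightarrow> 'x \<Rightarrow> 'x"
    and l :: nat and \<phi> :: "'c::{finite,ab_group_add} vec \<Rightarrow> 'g"
    and d z :: "nat \<Rightarrow> nat" and \<H> :: "'g set set"
    and a :: "nat \<Rightarrow> nat" and \<epsilon> :: real and E :: "('x \<times> 'x) set"
    and U :: "'x set" and y :: 'x and M :: real
  assumes "group_action G X act"
    and "countable (carrier G)"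
    and "chart G l \<phi> d z \<H>"
    and "0 < \<epsilon>" and "\<epsilon> < 1"
    and "rectangular G X act l \<phi> d z \<H> a \<epsilon> E"
    and "U \<in> X // E" and "U \<inter> XH G X act \<H> \<noteq> {}"
    and "y \<in> XH G X act \<H>"
    and "0 < M" and "M \<le> 2 ^ (22 * l) - 8"
    and "phiset act \<phi> (Rect l (\<lambda>_. 0) (\<lambda>i. M * real (a i))) y \<inter> U \<noteq> {}"
  shows "\<exists>v \<in> (Rect l (\<lambda>_. 0) (\<lambda>i. real (d i)) :: 'c vec set). \<exists>c r. \<exists>\<delta>>0.
           zvec l c \<and>
           act (\<phi> v) y \<in> XH G X act \<H> \<and>
           roughly G X act l \<phi> d z \<H> \<delta> c r (act (\<phi> v) y) U \<and>
           (\<forall>i<l. a i \<le> r i) \<and>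
           (\<forall>i<l. 2 * \<delta> * real (r i) \<le> \<epsilon> * real (a i)) \<and>
           (Rect l c (\<lambda>i. 2 ^ (22 * l) * real (r i)) :: 'c vec set)
              \<subseteq> Rect l (\<lambda>_. 0) (\<lambda>i. real (d i)) \<and>
           roughly G X act l \<phi> d z \<H> (2 * \<delta>) (\<lambda>i. c i + fst v i) r y U"
proof -
  have "0 < l"
    using assms(10,11) by (intro gr0I) simp
  obtain \<delta> c r x where "0 < \<delta>" and "2 * \<delta> < 1" and rough: "roughly G X act l \<phi> d z \<H> \<delta> c r x U"
    and a_r: "\<forall>i<l. a i \<le> r i"
    and big: "(Rect l c (\<lambda>i. 2 ^ (22 * l) * real (r i)) :: 'c vec set) \<subseteq> centered_Rect l d"
    and eps: "\<forall>i<l. 2 * \<delta> * real (r i) \<le> \<epsilon> * real (a i)"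
    using rectangularE[OF assms(6,3) \<open>0 < l\<close> assms(4,5,7,8)] by blast
  obtain s where s: "s \<in> Rect l (\<lambda>_. 0) (\<lambda>i. M * real (a i))" "act (\<phi> s) y \<in> U"
    using assms(12) unfolding phiset_def by auto
  have "\<bar>M * real (a i)\<bar> + 4 * real (r i) \<le> real (2 ^ (22 * l)) * real (r i)" if "i < l" for i
    using scaled_radius_bound[OF assms(10) _ a_r[rule_format, OF that]] assms(11) by simp
  moreover have "(Rect l c (\<lambda>i. real (2 ^ (22 * l)) * real (r i)) :: 'c vec set) \<subseteq> centered_Rect l d"
    using big by simp
  ultimately obtain v where v: "v \<in> centered_Rect l d" and x: "x = act (\<phi> v) y"
    and "(Rect l (\<lambda>i. c i + fst v i) (\<lambda>i. 2 * real (r i)) :: 'c vec set) \<subseteq> centered_Rect l d"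
    using roughly_base_point_eq_act_in_dom[OF assms(1,3) rough \<open>2 * \<delta> < 1\<close> assms(9) s] by blast
  then have "roughly G X act l \<phi> d z \<H> (2 * \<delta>) (\<lambda>i. c i + fst v i) r y U"
    using roughly_translate[OF assms(1,3) rough \<open>2 * \<delta> < 1\<close> assms(9) v x] by blast
  moreover have "zvec l c" and "x \<in> XH G X act \<H>"
    using rough unfolding roughly_def by blast+
  ultimately show ?thesis
    using v x \<open>0 < \<delta>\<close> rough a_r eps big by blast
qed

end
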